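(* Let $\mathbf A$ be an interior $r\ell u$-groupoid, $\mathbf B$ a partial subalgebra of $\mathbf A$, and let $(eq)$ be any one of the equations $(\mathsf e),(\mathsf c),(\mathsf i),(!\mathsf c),(!\mathsf e),(!\mathsf i),(!\mathsf a1),(!\mathsf a2)$. If $(eq)$ holds in $\mathbf A$, then it also holds in $\mathbf F^+_{\mathbf A,\mathbf B}$. (The same holds for an interior $r\ell uz$-groupoid $\mathbf A$, with $\mathbf F_{\mathbf A,\mathbf B}$ regarded as an enriched $ruz$-frame for any choice of $\epsilon\in T_B$; the listed equations do not involve $0$.)
   Context: An $r\ell u$-groupoid is an algebra $(A,\wedge,\vee,\cdot,\backslash,/,1)$ with $(A,\wedge,\vee)$ a lattice (order $\le$), $(A,\cdot,1)$ a unital groupoid (binary operation, not necessarily associative, with two-sided unit $1$), and $x\cdot y\le z\iff y\le x\backslash z\iff x\le z/y$; an $r\ell uz$-groupoid additionally has an arbitrary constant $0$. An interior one has a unary $!$ with $1\le !1$, $!x\cdot!y\le !(x\cdot y)$, $!x\le x$, $!x\le !!x$, $x\le y\Rightarrow !x\le !y$. Equations: $(\mathsf e)$ $x\cdot y\le y\cdot x$; $(\mathsf c)$ $x\le x\cdot x$; $(\mathsf i)$ $x\le 1$; $(!\mathsf i)$ $!x\le 1$; $(!\mathsf c)$ $!x\le !x\cdot !x$; $(!\mathsf e)$ $!x\cdot y=y\cdot !x$; $(!\mathsf a1)$ $!x\cdot(y\cdot z)=(!x\cdot y)\cdot z$; $(!\mathsf a2)$ $x\cdot(y\cdot !z)=(x\cdot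 y)\cdot !z$. A partial subalgebra $\mathbf B$ of $\mathbf A$ is a subset $B$ with $f^{\mathbf B}(\vec b)=f^{\mathbf A}(\vec b)$ if this lies in $B$, undefined otherwise. Enriched $ru$-frame: $(G,T,N,K)$ with $(G,\cdot,\varepsilon)$ a unital groupoid, $T$ a set, $N\subseteq G\times T$ nuclear (for all $x,y\in G,z\in T$ there are $x\backslash\!\!\backslash z, z/\!\!/y\in T$ with $x\cdot y\,N\,z\iff y\,N\,x\backslash\!\!\backslash z\iff x\,N\,z/\!\!/y$), $K$ a sub-unital-groupoid of $G$; an enriched $ruz$-frame additionally has $\epsilon\in T$. $X^{\rhd}=\{t\mid\forall x\in X\,xNt\}$, $Y^{\lhd}=\{g\mid\forall y\in Y\,gNy\}$, $\gamma_N(X)=X^{\rhd\lhd}$. $\mathbf F^+$: universe the closed sets ($\gamma_N(X)=X$), $X\wedge Y=X\cap Y$, $X\vee Y=\gamma_N(X\cup Y)$, $X\cdot Y=\gamma_N(X\circ Y)$ with $X\circ Y=\{x\cdot y\}$, $X\backslash Y=\{z\mid X\circ\{z\}\subseteq Y\}$, $Y/X=\{z\mid \{z\}\circ X\subseteq Y\}$, $!X=\gamma_N(X\cap K)$, unit $\gamma_N(\{\varepsilon\})$, and in the $ruz$ case zero $\{\epsilon\}^{\lhd}$. $\mathbf F_{\mathbf A,\mathbf B}=(G_B,T_B,N_B,K_B)$: $G_B$ the sub-unital-groupoid of $(A,\cdot,1)$ generated by $B$; $U_{G_B}$ the unary linear polynomials over $G_B$ (maps given by a groupoid term with one variable occurring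 exactly once and other leaves in $G_B$, including $\mathrm{id}$); $T_B=U_{G_B}\times B$; $x\,N_B\,(u,b)$ iff $u(x)\le^{\mathbf A}b$; $K_B$ the sub-unital-groupoid generated by $\{!^{\mathbf A}b\mid b\in B,\ !^{\mathbf A}b\in B\}$. *)

theory Defs
  imports Main
begin

record 'a irlu =
  meet :: "'a \<Rightarrow> 'a \<Rightarrow> 'a"
  join :: "'a \<Rightarrow> 'a \<Rightarrow> 'a"
  mul  :: "'a \<Rightarrow> 'a \<Rightarrow> 'a"
  ldiv :: "'a \<Rightarrow> 'a \<Rightarrow> 'a"
  rdiv :: "'a \<Rightarrow> 'a \<Rightarrow> 'a"
  one  :: "'a"
  bang :: "'a \<Rightarrow> 'a"

definition alg_le :: "'a irlu \<Rightarrow> 'a \<Rightarrow> 'a \<Rightarrow> bool" where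
  "alg_le A x y \<longleftrightarrow> meet A x y = x"

definition interior_rlu :: "'a irlu \<Rightarrow> bool" where
  "interior_rlu A \<longleftrightarrow>
     \<comment> \<open>lattice\<close>
     (\<forall>x y. meet A x y = meet A y x) \<and> (\<forall>x y. join A x y = join A y x) \<and>
     (\<forall>x y z. meet A x (meet A y z) = meet A (meet A x y) z) \<and>
     (\<forall>x y z. join A x (join A y z) = join A (join A x y) z) \<and>
     (\<forall>x y. meet A x (join A x y) = x) \<and> (\<forall>x y. join A x (meet A x y) = x) \<and>
     \<comment> \<open>unital groupoid\<close>
     (\<forall>x. mul A (one A) x = x) \<and> (\<forall>x. mul A x (one A) = x) \<and>
     \<comment> \<open>residuation\<close>
     (\<forall>x y z. alg_le A (mul A x y) z \<longleftrightarrow> alg_le A y (ldiv A x z)) \<and>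
     (\<forall>x y z. alg_le A (mul A x y) z \<longleftrightarrow> alg_le A x (rdiv A z y)) \<and>
     \<comment> \<open>interior operator\<close>
     alg_le A (one A) (bang A (one A)) \<and>
     (\<forall>x y. alg_le A (mul A (bang A x) (bang A y)) (bang A (mul A x y))) \<and>
     (\<forall>x. alg_le A (bang A x) x) \<and>
     (\<forall>x. alg_le A (bang A x) (bang A (bang A x))) \<and>
     (\<forall>x y. alg_le A x y \<longrightarrow> alg_le A (bang A x) (bang A y))"

datatype eqn = Eq_e | Eq_c | Eq_i | Eq_bang_c | Eq_bang_e | Eq_bang_i | Eq_bang_a1 | Eq_bang_a2

fun eq_holds :: "eqn \<Rightarrow> 'x set \<Rightarrow> ('x \<Rightarrow> 'x \<Rightarrow> bool) \<Rightarrow> ('x \<Rightarrow> 'x \<Rightarrow> 'x) \<Rightarrow> 'x \<Rightarrow> ('x \<Rightarrow> 'x) \<Rightarrow> bool" where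
  "eq_holds Eq_e U le m e bg = (\<forall>x\<in>U. \<forall>y\<in>U. le (m x y) (m y x))"
| "eq_holds Eq_c U le m e bg = (\<forall>x\<in>U. le x (m x x))"
| "eq_holds Eq_i U le m e bg = (\<forall>x\<in>U. le x e)"
| "eq_holds Eq_bang_i U le m e bg = (\<forall>x\<in>U. le (bg x) e)"
| "eq_holds Eq_bang_c U le m e bg = (\<forall>x\<in>U. le (bg x) (m (bg x) (bg x)))"
| "eq_holds Eq_bang_e U le m e bg = (\<forall>x\<in>U. \<forall>y\<in>U. m (bg x) y = m y (bg x))"
| "eq_holds Eq_bang_a1 U le m e bg =
     (\<forall>x\<in>U. \<forall>y\<in>U. \<forall>z\<in>U. m (bg x) (m y z) = m (m (bg x) y) z)"
| "eq_holds Eq_bang_a2 U le m e bg =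
     (\<forall>x\<in>U. \<forall>y\<in>U. \<forall>z\<in>U. m x (m y (bg z)) = m (m x y) (bg z))"

section \<open>Complex algebra F^+ of an enriched frame (G,T,N,K) with groupoid (m, eps)\<close>

definition rhd :: "'t set \<Rightarrow> ('g \<Rightarrow> 't \<Rightarrow> bool) \<Rightarrow> 'g set \<Rightarrow> 't set" where
  "rhd T N X = {t \<in> T. \<forall>x\<in>X. N x t}"

definition lhd :: "'g set \<Rightarrow> ('g \<Rightarrow> 't \<Rightarrow> bool) \<Rightarrow> 't set \<Rightarrow> 'g set" where
  "lhd G N Y = {g \<in> G. \<forall>y\<in>Y. N g y}"

definition gamma :: "'g set \<Rightarrow> 't set \<Rightarrow> ('g \<Rightarrow> 't \<Rightarrow> bool) \<Rightarrow> 'g set \<Rightarrow> 'g set" where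
  "gamma G T N X = lhd G N (rhd T N X)"

definition Fclosed :: "'g set \<Rightarrow> 't set \<Rightarrow> ('g \<Rightarrow> 't \<Rightarrow> bool) \<Rightarrow> 'g set set" where
  "Fclosed G T N = {X. X \<subseteq> G \<and> gamma G T N X = X}"

definition Fmul :: "('g \<Rightarrow> 'g \<Rightarrow> 'g) \<Rightarrow> 'g set \<Rightarrow> 't set \<Rightarrow> ('g \<Rightarrow> 't \<Rightarrow> bool) \<Rightarrow> 'g set \<Rightarrow> 'g set \<Rightarrow> 'g set" where
  "Fmul m G T N X Y = gamma G T N {m x y | x y. x \<in> X \<and> y \<in> Y}"

definition Funit :: "'g \<Rightarrow> 'g set \<Rightarrow> 't set \<Rightarrow> ('g \<Rightarrow> 't \<Rightarrow> bool) \<Rightarrow> 'g set" where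
  "Funit eps G T N = gamma G T N {eps}"

definition Fbang :: "'g set \<Rightarrow> 'g set \<Rightarrow> 't set \<Rightarrow> ('g \<Rightarrow> 't \<Rightarrow> bool) \<Rightarrow> 'g set \<Rightarrow> 'g set" where
  "Fbang K G T N X = gamma G T N (X \<inter> K)"

section \<open>The frame F_{A,B}\<close>

inductive_set gen_sub :: "'a irlu \<Rightarrow> 'a set \<Rightarrow> 'a set" for A S where
  gen_base: "x \<in> S \<Longrightarrow> x \<in> gen_sub A S"
| gen_one: "one A \<in> gen_sub A S"
| gen_mul: "x \<in> gen_sub A S \<Longrightarrow> y \<in> gen_sub A S \<Longrightarrow> mul A x y \<in> gen_sub A S"

definition GB :: "'a irlu \<Rightarrow> 'a set \<Rightarrow> 'a set" where
  "GB A B = gen_sub A B"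

text \<open>Unary linear polynomials over a set G of constants: id, and g*u, u*g for g in G.
  (Every groupoid term with exactly one occurrence of the variable and other leaves
   in G_B evaluates to such a map, since G_B is closed under product and contains 1.)\<close>
inductive_set lin_polys :: "'a irlu \<Rightarrow> 'a set \<Rightarrow> ('a \<Rightarrow> 'a) set" for A G where
  lp_id: "(\<lambda>x. x) \<in> lin_polys A G"
| lp_left: "g \<in> G \<Longrightarrow> u \<in> lin_polys A G \<Longrightarrow> (\<lambda>x. mul A g (u x)) \<in> lin_polys A G"
| lp_right: "g \<in> G \<Longrightarrow> u \<in> lin_polys A G \<Longrightarrow> (\<lambda>x. mul A (u x) g) \<in> lin_polys A G"

definition TB :: "'a irlu \<Rightarrow> 'a set \<Rightarrow> (('a \<Rightarrow> 'a) \<times> 'a) set" where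
  "TB A B = lin_polys A (GB A B) \<times> B"

definition NB :: "'a irlu \<Rightarrow> 'a \<Rightarrow> ('a \<Rightarrow> 'a) \<times> 'a \<Rightarrow> bool" where
  "NB A x t \<longleftrightarrow> alg_le A (fst t x) (snd t)"

definition KB :: "'a irlu \<Rightarrow> 'a set \<Rightarrow> 'a set" where
  "KB A B = gen_sub A {bang A b | b. b \<in> B \<and> bang A b \<in> B}"

end

theory Submission
  imports Defs
begin

text \<open>Nuclearity of the polarity makes its closure \<open>\<gamma>\<close> compatible with products of sets:
  \<open>\<gamma>(\<gamma>S \<circ> R) = \<gamma>(S \<circ> R) = \<gamma>(S \<circ> \<gamma>R)\<close>, so an identity between products of closed sets can be
  checked on arbitrary generating sets. In the frame of A and B the closed sets are moreover
  downsets of A, because the test maps \<open>u\<close> are monotone, and \<open>!\<close> is the identity on \<open>K\<^sub>B\<close>.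
  Hence an inequation of A transfers because every generator of the left-hand closed set lies
  below a generator of the right-hand one, and an equation involving \<open>!\<close> transfers because
  it already holds between the generating sets, on which \<open>!\<close> acts trivially.\<close>

abbreviation set_mul :: "('g \<Rightarrow> 'g \<Rightarrow> 'g) \<Rightarrow> 'g set \<Rightarrow> 'g set \<Rightarrow> 'g set" where
  "set_mul m X Y \<equiv> {m x y | x y. x \<in> X \<and> y \<in> Y}"

lemma set_mul_subset:
  "(\<And>x y. x \<in> G \<Longrightarrow> y \<in> G \<Longrightarrow> m x y \<in> G) \<Longrightarrow> X \<subseteq> G \<Longrightarrow> Y \<subseteq> G \<Longrightarrow> set_mul m X Y \<subseteq> G"
  by blast

lemma set_mul_commute:
  "(\<And>x y. x \<in> X \<Longrightarrow> y \<in> Y \<Longrightarrow> m x y = m y x) \<Longrightarrow> set_mul m X Y = set_mul m Y X"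
  by (auto; metis)

lemma set_mul_assoc:
  "(\<And>x y z. x \<in> X \<Longrightarrow> y \<in> Y \<Longrightarrow> z \<in> Z \<Longrightarrow> m x (m y z) = m (m x y) z)
   \<Longrightarrow> set_mul m X (set_mul m Y Z) = set_mul m (set_mul m X Y) Z"
  by (auto; metis)

section \<open>Galois closure of a nuclear polarity\<close>

definition nuclear :: "('g \<Rightarrow> 'g \<Rightarrow> 'g) \<Rightarrow> 'g set \<Rightarrow> 't set \<Rightarrow> ('g \<Rightarrow> 't \<Rightarrow> bool) \<Rightarrow> bool" where
  "nuclear m G T N \<longleftrightarrow>
     (\<forall>x\<in>G. \<forall>z\<in>T. \<exists>t\<in>T. \<forall>y\<in>G. N (m x y) z \<longleftrightarrow> N y t) \<and>
     (\<forall>y\<in>G. \<forall>z\<in>T. \<exists>t\<in>T. \<forall>x\<in>G. N (m x y) z \<longleftrightarrow> N x t)"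

lemma gamma_subset: "gamma G T N X \<subseteq> G"
  unfolding gamma_def lhd_def by auto

lemma subset_gamma: "X \<subseteq> G \<Longrightarrow> X \<subseteq> gamma G T N X"
  unfolding gamma_def lhd_def rhd_def by auto

lemma gamma_least: "S \<subseteq> gamma G T N Y \<Longrightarrow> gamma G T N S \<subseteq> gamma G T N Y"
  unfolding gamma_def lhd_def rhd_def by blast

lemma gamma_mono: "X \<subseteq> Y \<Longrightarrow> Y \<subseteq> G \<Longrightarrow> gamma G T N X \<subseteq> gamma G T N Y"
  by (meson gamma_least order_trans subset_gamma)

lemma Fclosed_subset: "X \<in> Fclosed G T N \<Longrightarrow> X \<subseteq> G"
  unfolding Fclosed_def by simp

lemma gamma_set_mul_gamma_left:
  assumes nuc: "nuclear m G T N" and closed: "\<And>x y. x \<in> G \<Longrightarrow> y \<in> G \<Longrightarrow> m x y \<in> G"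
    and S: "S \<subseteq> G" and R: "R \<subseteq> G"
  shows "gamma G T N (set_mul m (gamma G T N S) R) = gamma G T N (set_mul m S R)"
proof (rule subset_antisym)
  have "set_mul m S R \<subseteq> set_mul m (gamma G T N S) R"
    using subset_gamma[OF S] by blast
  moreover have "set_mul m (gamma G T N S) R \<subseteq> G"
    by (rule set_mul_subset[OF closed gamma_subset R])
  ultimately show "gamma G T N (set_mul m S R) \<subseteq> gamma G T N (set_mul m (gamma G T N S) R)"
    by (rule gamma_mono)
  have "m s r \<in> gamma G T N (set_mul m S R)" if s: "s \<in> gamma G T N S" and r: "r \<in> R" for s r
  proof -
    have "N (m s r) z" if z: "z \<in> rhd T N (set_mul m S R)" for z
    proof -
      have "r \<in> G" "z \<in> T"
        using r R z unfolding rhd_def by auto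
      then obtain t where "t \<in> T" and t: "\<And>x. x \<in> G \<Longrightarrow> N (m x r) z \<longleftrightarrow> N x t"
        using nuc unfolding nuclear_def by meson
      moreover have "N (m x r) z" if "x \<in> S" for x
        using z r that unfolding rhd_def by blast
      ultimately have "t \<in> rhd T N S"
        using S unfolding rhd_def by blast
      then have "N s t"
        using s unfolding gamma_def lhd_def by blast
      moreover have "s \<in> G"
        by (rule subsetD[OF gamma_subset s])
      ultimately show ?thesis
        using t by blast
    qed
    moreover have "m s r \<in> G"
      using subsetD[OF gamma_subset s] r R by (blast intro: closed)
    ultimately show ?thesis
      unfolding gamma_def lhd_def by blast
  qed
  then show "gamma G T N (set_mul m (gamma G T N S) R) \<subseteq> gamma G T N (set_mul m S R)"
    by (intro gamma_least) blast
qed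

lemma gamma_set_mul_gamma_right:
  assumes nuc: "nuclear m G T N" and closed: "\<And>x y. x \<in> G \<Longrightarrow> y \<in> G \<Longrightarrow> m x y \<in> G"
    and S: "S \<subseteq> G" and R: "R \<subseteq> G"
  shows "gamma G T N (set_mul m R (gamma G T N S)) = gamma G T N (set_mul m R S)"
proof -
  let ?m' = "\<lambda>x y. m y x"
  have "nuclear ?m' G T N"
    using nuc unfolding nuclear_def by blast
  moreover have "set_mul m R X = set_mul ?m' X R" for X
    by blast
  ultimately show ?thesis
    using gamma_set_mul_gamma_left[of ?m' G T N S R] closed S R by simp
qed

locale interior_rlu_algebra =
  fixes A :: "'a irlu"
  assumes interior: "interior_rlu A"
begin

lemma le_refl: "alg_le A x x"
  using interior unfolding interior_rlu_def alg_le_def by metis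

lemma le_trans: "alg_le A x y \<Longrightarrow> alg_le A y z \<Longrightarrow> alg_le A x z"
  using interior unfolding interior_rlu_def alg_le_def by metis

lemma le_antisym: "alg_le A x y \<Longrightarrow> alg_le A y x \<Longrightarrow> x = y"
  using interior unfolding interior_rlu_def alg_le_def by metis

lemma mul_mono_right: "alg_le A x y \<Longrightarrow> alg_le A (mul A g x) (mul A g y)"
  using interior le_refl le_trans unfolding interior_rlu_def by metis

lemma mul_mono_left: "alg_le A x y \<Longrightarrow> alg_le A (mul A x g) (mul A y g)"
  using interior le_refl le_trans unfolding interior_rlu_def by metis

lemma lin_polys_mono: "u \<in> lin_polys A G \<Longrightarrow> alg_le A x y \<Longrightarrow> alg_le A (u x) (u y)"
  by (induction u rule: lin_polys.induct) (auto intro: mul_mono_left mul_mono_right)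

text \<open>The image of \<open>!\<close> consists of fixed points, and products of fixed points are fixed
  since \<open>x y = !x !y \<le> !(x y) \<le> x y\<close>.\<close>
lemma bang_fixed_KB:
  assumes "k \<in> KB A B"
  shows "bang A k = k"
  using assms unfolding KB_def
proof (induction k rule: gen_sub.induct)
  case (gen_base x)
  then obtain b where "x = bang A b"
    by blast
  then have "alg_le A (bang A x) x" "alg_le A x (bang A x)"
    using interior unfolding interior_rlu_def by auto
  then show ?case
    by (rule le_antisym)
next
  case gen_one
  have "alg_le A (bang A (one A)) (one A)" "alg_le A (one A) (bang A (one A))"
    using interior unfolding interior_rlu_def by auto
  then show ?case
    by (rule le_antisym)
next
  case (gen_mul x y)
  have "alg_le A (bang A (mul A x y)) (mul A x y)"
    using interior unfolding interior_rlu_def by blast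
  moreover have "alg_le A (mul A x y) (bang A (mul A x y))"
    using interior gen_mul.IH unfolding interior_rlu_def by metis
  ultimately show ?case
    by (rule le_antisym)
qed

abbreviation valid_in_A :: "eqn \<Rightarrow> bool" where
  "valid_in_A q \<equiv> eq_holds q UNIV (alg_le A) (mul A) (one A) (bang A)"

end

section \<open>The frame of A and B\<close>

lemma lin_polys_comp_mul_right:
  "u \<in> lin_polys A G \<Longrightarrow> y \<in> G \<Longrightarrow> (\<lambda>x. u (mul A x y)) \<in> lin_polys A G"
  by (induction u rule: lin_polys.induct)
    (auto intro: lin_polys.intros lin_polys.lp_right[OF _ lin_polys.lp_id, simplified])

lemma lin_polys_comp_mul_left:
  "u \<in> lin_polys A G \<Longrightarrow> x \<in> G \<Longrightarrow> (\<lambda>y. u (mul A x y)) \<in> lin_polys A G"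
  by (induction u rule: lin_polys.induct)
    (auto intro: lin_polys.intros lin_polys.lp_left[OF _ lin_polys.lp_id, simplified])

lemma GB_mul_closed: "x \<in> GB A B \<Longrightarrow> y \<in> GB A B \<Longrightarrow> mul A x y \<in> GB A B"
  unfolding GB_def by (rule gen_mul)

lemma one_in_GB: "one A \<in> GB A B"
  unfolding GB_def by (rule gen_one)

text \<open>The residuals of a test \<open>(u, b)\<close> are obtained by composing \<open>u\<close> with a multiplication.\<close>
lemma nuclear_frame: "nuclear (mul A) (GB A B) (TB A B) (NB A)"
  unfolding nuclear_def TB_def NB_def
  by (fastforce intro: lin_polys_comp_mul_left lin_polys_comp_mul_right)

locale subalgebra_frame = interior_rlu_algebra +
  fixes B :: "'a set"
begin

abbreviation cl :: "'a set \<Rightarrow> 'a set" where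
  "cl \<equiv> gamma (GB A B) (TB A B) (NB A)"

abbreviation valid_in_F :: "eqn \<Rightarrow> bool" where
  "valid_in_F q \<equiv> eq_holds q (Fclosed (GB A B) (TB A B) (NB A)) (\<subseteq>)
     (Fmul (mul A) (GB A B) (TB A B) (NB A)) (Funit (one A) (GB A B) (TB A B) (NB A))
     (Fbang (KB A B) (GB A B) (TB A B) (NB A))"

lemma cl_downward_closed:
  assumes y: "y \<in> cl S" and x: "x \<in> GB A B" and "alg_le A x y"
  shows "x \<in> cl S"
proof -
  have "NB A x (u, b)" if "(u, b) \<in> rhd (TB A B) (NB A) S" for u b
  proof -
    have "alg_le A (u y) b"
      using y that unfolding gamma_def lhd_def NB_def by fastforce
    moreover have "u \<in> lin_polys A (GB A B)"
      using that unfolding rhd_def TB_def by blast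
    ultimately show ?thesis
      using lin_polys_mono le_trans \<open>alg_le A x y\<close> unfolding NB_def by fastforce
  qed
  then show ?thesis
    using x unfolding gamma_def lhd_def by fastforce
qed

lemma cl_subset_cl_if_dominated:
  assumes "S \<subseteq> GB A B" "R \<subseteq> GB A B" and dom: "\<And>s. s \<in> S \<Longrightarrow> \<exists>r\<in>R. alg_le A s r"
  shows "cl S \<subseteq> cl R"
proof (rule gamma_least, rule subsetI)
  fix s assume "s \<in> S"
  with dom obtain r where "r \<in> R" "alg_le A s r"
    by blast
  then show "s \<in> cl R"
    using assms(1,2) \<open>s \<in> S\<close> subset_gamma cl_downward_closed by blast
qed

lemma cl_set_mul_cl_left:
  "S \<subseteq> GB A B \<Longrightarrow> R \<subseteq> GB A B \<Longrightarrow> cl (set_mul (mul A) (cl S) R) = cl (set_mul (mul A) S R)"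
  by (rule gamma_set_mul_gamma_left[OF nuclear_frame GB_mul_closed])

lemma cl_set_mul_cl_right:
  "S \<subseteq> GB A B \<Longrightarrow> R \<subseteq> GB A B \<Longrightarrow> cl (set_mul (mul A) R (cl S)) = cl (set_mul (mul A) R S)"
  by (rule gamma_set_mul_gamma_right[OF nuclear_frame GB_mul_closed])

lemma set_mul_GB: "X \<subseteq> GB A B \<Longrightarrow> Y \<subseteq> GB A B \<Longrightarrow> set_mul (mul A) X Y \<subseteq> GB A B"
  by (rule set_mul_subset[OF GB_mul_closed])

lemma valid_in_F_Eq_e:
  assumes "valid_in_A Eq_e"
  shows "valid_in_F Eq_e"
proof -
  have for_subsets: "cl (set_mul (mul A) X Y) \<subseteq> cl (set_mul (mul A) Y X)"
    if "X \<subseteq> GB A B" "Y \<subseteq> GB A B" for X Y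
    using assms that by (intro cl_subset_cl_if_dominated set_mul_GB) auto
  show ?thesis
    unfolding eq_holds.simps Fmul_def
    by (intro ballI for_subsets) (simp_all add: Fclosed_subset le_infI1)
qed

lemma valid_in_F_Eq_c:
  assumes "valid_in_A Eq_c"
  shows "valid_in_F Eq_c"
proof -
  have for_subsets: "X \<subseteq> cl (set_mul (mul A) X X)" if X: "X \<subseteq> GB A B" for X
  proof -
    have "cl X \<subseteq> cl (set_mul (mul A) X X)"
      using assms X by (intro cl_subset_cl_if_dominated set_mul_GB) auto
    then show ?thesis
      using subset_gamma[OF X] by blast
  qed
  show ?thesis
    unfolding eq_holds.simps Fmul_def
    by (intro ballI for_subsets) (simp_all add: Fclosed_subset le_infI1)
qed

lemma valid_in_F_Eq_i:
  assumes "valid_in_A Eq_i"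
  shows "valid_in_F Eq_i"
proof -
  have for_subsets: "X \<subseteq> cl {one A}" if X: "X \<subseteq> GB A B" for X
  proof -
    have "cl X \<subseteq> cl {one A}"
      using assms X one_in_GB by (intro cl_subset_cl_if_dominated) auto
    then show ?thesis
      using subset_gamma[OF X] by blast
  qed
  show ?thesis
    unfolding eq_holds.simps Funit_def
    by (intro ballI for_subsets) (simp_all add: Fclosed_subset le_infI1)
qed

lemma valid_in_F_Eq_bang_i:
  assumes "valid_in_A Eq_bang_i"
  shows "valid_in_F Eq_bang_i"
proof -
  have for_subsets: "cl S \<subseteq> cl {one A}" if S: "S \<subseteq> GB A B" "S \<subseteq> KB A B" for S
  proof -
    have "alg_le A s (one A)" if "s \<in> S" for s
      using assms bang_fixed_KB[of s B] that S(2) by (metis UNIV_I eq_holds.simps(4) subsetD)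
    then show ?thesis
      using S(1) one_in_GB by (intro cl_subset_cl_if_dominated) auto
  qed
  show ?thesis
    unfolding eq_holds.simps Funit_def Fbang_def
    by (intro ballI for_subsets) (simp_all add: Fclosed_subset le_infI1)
qed

lemma valid_in_F_Eq_bang_c:
  assumes "valid_in_A Eq_bang_c"
  shows "valid_in_F Eq_bang_c"
proof -
  have for_subsets: "cl S \<subseteq> cl (set_mul (mul A) (cl S) (cl S))" if S: "S \<subseteq> GB A B" "S \<subseteq> KB A B" for S
  proof -
    have "alg_le A s (mul A s s)" if "s \<in> S" for s
      using assms bang_fixed_KB[of s B] that S(2) by (metis UNIV_I eq_holds.simps(5) subsetD)
    then have "cl S \<subseteq> cl (set_mul (mul A) S S)"
      using S(1) by (intro cl_subset_cl_if_dominated set_mul_GB) blast+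
    also have "cl (set_mul (mul A) S S) = cl (set_mul (mul A) S (cl S))"
      by (rule cl_set_mul_cl_right[symmetric, OF S(1) S(1)])
    also have "\<dots> = cl (set_mul (mul A) (cl S) (cl S))"
      by (rule cl_set_mul_cl_left[symmetric, OF S(1) gamma_subset])
    finally show ?thesis .
  qed
  show ?thesis
    unfolding eq_holds.simps Fmul_def Fbang_def
    by (intro ballI for_subsets) (simp_all add: Fclosed_subset le_infI1)
qed

lemma valid_in_F_Eq_bang_e:
  assumes "valid_in_A Eq_bang_e"
  shows "valid_in_F Eq_bang_e"
proof -
  have for_subsets: "cl (set_mul (mul A) (cl S) Y) = cl (set_mul (mul A) Y (cl S))"
    if S: "S \<subseteq> GB A B" "S \<subseteq> KB A B" and Y: "Y \<subseteq> GB A B" for S Y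
  proof -
    have "mul A k y = mul A y k" if "k \<in> KB A B" for k y
      using assms bang_fixed_KB[OF that] by (metis UNIV_I eq_holds.simps(6))
    then have comm: "set_mul (mul A) S Y = set_mul (mul A) Y S"
      using S(2) by (intro set_mul_commute) blast
    have "cl (set_mul (mul A) (cl S) Y) = cl (set_mul (mul A) S Y)"
      by (rule cl_set_mul_cl_left[OF S(1) Y])
    also have "\<dots> = cl (set_mul (mul A) Y S)"
      using comm by (rule arg_cong)
    also have "\<dots> = cl (set_mul (mul A) Y (cl S))"
      by (rule cl_set_mul_cl_right[symmetric, OF S(1) Y])
    finally show ?thesis .
  qed
  show ?thesis
    unfolding eq_holds.simps Fmul_def Fbang_def
    by (intro ballI for_subsets) (simp_all add: Fclosed_subset le_infI1)
qed

lemma valid_in_F_Eq_bang_a1: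
  assumes "valid_in_A Eq_bang_a1"
  shows "valid_in_F Eq_bang_a1"
proof -
  have for_subsets: "cl (set_mul (mul A) (cl S) (cl (set_mul (mul A) Y W)))
      = cl (set_mul (mul A) (cl (set_mul (mul A) (cl S) Y)) W)"
    if S: "S \<subseteq> GB A B" "S \<subseteq> KB A B" and Y: "Y \<subseteq> GB A B" and W: "W \<subseteq> GB A B" for S Y W
  proof -
    have "mul A k (mul A y w) = mul A (mul A k y) w" if "k \<in> KB A B" for k y w
      using assms bang_fixed_KB[OF that] by (metis UNIV_I eq_holds.simps(7))
    then have assoc: "set_mul (mul A) S (set_mul (mul A) Y W) = set_mul (mul A) (set_mul (mul A) S Y) W"
      using S(2) by (intro set_mul_assoc) blast
    have "cl (set_mul (mul A) (cl S) (cl (set_mul (mul A) Y W)))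
        = cl (set_mul (mul A) S (cl (set_mul (mul A) Y W)))"
      by (rule cl_set_mul_cl_left[OF S(1) gamma_subset])
    also have "\<dots> = cl (set_mul (mul A) S (set_mul (mul A) Y W))"
      by (rule cl_set_mul_cl_right[OF set_mul_GB[OF Y W] S(1)])
    also have "\<dots> = cl (set_mul (mul A) (set_mul (mul A) S Y) W)"
      using assoc by (rule arg_cong)
    also have "\<dots> = cl (set_mul (mul A) (cl (set_mul (mul A) S Y)) W)"
      by (rule cl_set_mul_cl_left[symmetric, OF set_mul_GB[OF S(1) Y] W])
    also have "\<dots> = cl (set_mul (mul A) (cl (set_mul (mul A) (cl S) Y)) W)"
      by (subst cl_set_mul_cl_left[OF S(1) Y]) (rule refl)
    finally show ?thesis .
  qed
  show ?thesis
    unfolding eq_holds.simps Fmul_def Fbang_def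
    by (intro ballI for_subsets) (simp_all add: Fclosed_subset le_infI1)
qed

lemma valid_in_F_Eq_bang_a2:
  assumes "valid_in_A Eq_bang_a2"
  shows "valid_in_F Eq_bang_a2"
proof -
  have for_subsets: "cl (set_mul (mul A) X (cl (set_mul (mul A) Y (cl S))))
      = cl (set_mul (mul A) (cl (set_mul (mul A) X Y)) (cl S))"
    if X: "X \<subseteq> GB A B" and Y: "Y \<subseteq> GB A B" and S: "S \<subseteq> GB A B" "S \<subseteq> KB A B" for X Y S
  proof -
    have "mul A x (mul A y k) = mul A (mul A x y) k" if "k \<in> KB A B" for x y k
      using assms bang_fixed_KB[OF that] by (metis UNIV_I eq_holds.simps(8))
    then have assoc: "set_mul (mul A) X (set_mul (mul A) Y S) = set_mul (mul A) (set_mul (mul A) X Y) S"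
      using S(2) by (intro set_mul_assoc) blast
    have "cl (set_mul (mul A) X (cl (set_mul (mul A) Y (cl S))))
        = cl (set_mul (mul A) X (cl (set_mul (mul A) Y S)))"
      by (subst cl_set_mul_cl_right[OF S(1) Y]) (rule refl)
    also have "\<dots> = cl (set_mul (mul A) X (set_mul (mul A) Y S))"
      by (rule cl_set_mul_cl_right[OF set_mul_GB[OF Y S(1)] X])
    also have "\<dots> = cl (set_mul (mul A) (set_mul (mul A) X Y) S)"
      using assoc by (rule arg_cong)
    also have "\<dots> = cl (set_mul (mul A) (cl (set_mul (mul A) X Y)) S)"
      by (rule cl_set_mul_cl_left[symmetric, OF set_mul_GB[OF X Y] S(1)])
    also have "\<dots> = cl (set_mul (mul A) (cl (set_mul (mul A) X Y)) (cl S))"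
      by (rule cl_set_mul_cl_right[symmetric, OF S(1) gamma_subset])
    finally show ?thesis .
  qed
  show ?thesis
    unfolding eq_holds.simps Fmul_def Fbang_def
    by (intro ballI for_subsets) (simp_all add: Fclosed_subset le_infI1)
qed

end

theorem mainTheorem9:
  fixes A :: "'a irlu" and B :: "'a set" and q :: eqn
  assumes "interior_rlu A"
    and "eq_holds q UNIV (alg_le A) (mul A) (one A) (bang A)"
  shows "eq_holds q (Fclosed (GB A B) (TB A B) (NB A)) (\<subseteq>)
           (Fmul (mul A) (GB A B) (TB A B) (NB A))
           (Funit (one A) (GB A B) (TB A B) (NB A))
           (Fbang (KB A B) (GB A B) (TB A B) (NB A))"
proof -
  interpret subalgebra_frame A B
    using assms(1) by unfold_locales
  from assms(2) show ?thesis
    by (induction q) (erule valid_in_F_Eq_e valid_in_F_Eq_c valid_in_F_Eq_i valid_in_F_Eq_bang_i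
        valid_in_F_Eq_bang_c valid_in_F_Eq_bang_e valid_in_F_Eq_bang_a1 valid_in_F_Eq_bang_a2)+
qed

end
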